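(* Assume $\bar\Phi_p=0$ and $\Phi_p^\top\Phi_p=\mathrm{diag}(\sigma_1^2,\dots,\sigma_d^2)$ with all $\sigma_j^2>0$. Let $\Lambda=\mathrm{diag}(\lambda_1,\dots,\lambda_d)$ with $\lambda_j\ge0$, let $\hat\beta^\Lambda_{\mathrm{ridge}}:=(\Phi_p^\top\Phi_p+\Lambda)^{-1}\Phi_p^\top Y_p$, let $\delta\ge 0$, and let $\hat w^\delta_{\ell_2}$ be the $\ell_2$ balancing weights, $\tfrac1n\hat w^\delta_{\ell_2}=\bar\Phi_q(\Phi_p^\top\Phi_p+\delta I)^{-1}\Phi_p^\top$. Define $\Gamma=\mathrm{diag}(\gamma_1,\dots,\gamma_d)$ with $$\gamma_j:=\frac{\delta\lambda_j}{\sigma_j^2+\lambda_j+\delta}$$ (with $\gamma_j:=0$ if the denominator is $0$ is impossible here since $\sigma_j^2>0$). Then $0\le\gamma_j\le\lambda_j$ for all $j$ and $$\bar\Phi_q\hat\beta^\Lambda_{\mathrm{ridge}}+\tfrac1n\hat w^\delta_{\ell_2}(Y_p-\Phi_p\hat\beta^\Lambda_{\mathrm{ridge}})=\bar\Phi_q\hat\beta^\Gamma_{\mathrm{ridge}},\qquad \hat\beta^\Gamma_{\mathrm{ridge}}:=(\Phi_p^\top\Phi_p+\Gamma)^{-1}\Phi_p^\top Y_p.$$ Moreover, if $\lambda_j=\lambda$ and $\sigma_j=\sigma$ for all $j$, then all $\gamma_j$ are equal, so $\hat\beta^\Gamma_{\mathrm{ridge}}$ is a standard ridge regression estimator.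
   Context: $\Phi_p\in\mathbb{R}^{n\times d}$ (source features), $Y_p\in\mathbb{R}^n$ (outcomes), $\Phi_q\in\mathbb{R}^{n\times d}$ (target features); $\bar\Phi_p,\bar\Phi_q\in\mathbb{R}^{1\times d}$ are column averages. The left-hand side is the augmented ("double ridge") estimator combining a generalized ridge outcome model with $\ell_2$ balancing weights. *)

theory Defs
  imports "HOL-Analysis.Analysis"
begin

text \<open>Matrices with n rows (index type 'n) and d columns (index type 'd):
  a feature matrix is of type real^'d^'n.\<close>

definition col_avg :: "real^'d^'n \<Rightarrow> real^'d" where
  "col_avg Phi = (\<chi> j. (\<Sum>i\<in>UNIV. Phi $ i $ j) / real CARD('n))"

definition diagm :: "real^'d \<Rightarrow> real^'d^'d" where
  "diagm v = (\<chi> i j. if i = j then v $ i else 0)"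

definition ridge :: "real^'d^'n \<Rightarrow> real^'n \<Rightarrow> real^'d^'d \<Rightarrow> real^'d" where
  "ridge Phi Y Lam = matrix_inv (transpose Phi ** Phi + Lam) *v (transpose Phi *v Y)"

text \<open>(1/n) times the l2 balancing weights, as a (row) vector of length n:
  bar Phi_q (Phi_p^T Phi_p + delta I)^{-1} Phi_p^T.\<close>
definition l2_weights_scaled :: "real^'d^'n \<Rightarrow> real^'d^'n \<Rightarrow> real \<Rightarrow> real^'n" where
  "l2_weights_scaled Phip Phiq delta =
     col_avg Phiq v* (matrix_inv (transpose Phip ** Phip + delta *\<^sub>R mat 1) ** transpose Phip)"

definition gamma_vec :: "real^'d \<Rightarrow> real^'d \<Rightarrow> real \<Rightarrow> real^'d" where
  "gamma_vec sig lam delta = (\<chi> j. delta * lam $ j / ((sig $ j)\<^sup>2 + lam $ j + delta))"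

end

theory Submission
  imports Defs
begin

text \<open>With \<open>\<Phi>\<^sub>p\<^sup>T\<Phi>\<^sub>p\<close> diagonal, every matrix in sight is diagonal, so the identity
  decouples coordinatewise. Writing \<open>s = \<sigma>\<^sub>j\<^sup>2\<close>, \<open>b = (\<Phi>\<^sub>p\<^sup>TY\<^sub>p)\<^sub>j\<close>, the \<open>j\<close>-th coordinate
  of the augmented estimator is
  \<open>b/(s+\<lambda>) + (b - s\<cdot>b/(s+\<lambda>))/(s+\<delta>) = b(s+\<lambda>+\<delta>)/((s+\<lambda>)(s+\<delta>))\<close>,
  and \<open>(s+\<lambda>)(s+\<delta>)/(s+\<lambda>+\<delta>) = s + \<delta>\<lambda>/(s+\<lambda>+\<delta>) = s + \<gamma>\<close>.\<close>

lemma matrix_inv_unique: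
  fixes A :: "'a::semiring_1^'n^'m" and B :: "'a^'m^'n"
  assumes "A ** B = mat 1" "B ** A = mat 1"
  shows "matrix_inv A = B"
proof -
  let ?C = "matrix_inv A"
  have "A ** ?C = mat 1 \<and> ?C ** A = mat 1"
    unfolding matrix_inv_def by (rule someI[of _ B]) (use assms in auto)
  then have "?C = (B ** A) ** ?C" "A ** ?C = mat 1"
    using assms(2) by (auto simp: matrix_mul_lid)
  then show ?thesis by (metis matrix_mul_assoc matrix_mul_rid)
qed

lemma diagm_mult_diagm: "diagm u ** diagm v = diagm (\<chi> j. u $ j * v $ j)"
  unfolding diagm_def matrix_matrix_mult_def
  by (simp add: vec_eq_iff if_distrib[of "\<lambda>x. _ * x"] cong: if_cong)

lemma diagm_add: "diagm u + diagm v = diagm (u + v)"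
  unfolding diagm_def by (simp add: vec_eq_iff)

lemma scaleR_mat1_eq_diagm: "c *\<^sub>R (mat 1 :: real^'d^'d) = diagm (\<chi> j. c)"
  unfolding diagm_def mat_def by (simp add: vec_eq_iff)

lemma matrix_inv_diagm:
  assumes "\<And>j. u $ j \<noteq> 0"
  shows "matrix_inv (diagm u) = diagm (\<chi> j. 1 / u $ j)"
  by (rule matrix_inv_unique; unfold diagm_mult_diagm)
    (use assms in \<open>simp_all add: diagm_def mat_def vec_eq_iff\<close>)

lemma diagm_mult_vec: "diagm u *v x = (\<chi> j. u $ j * x $ j)"
  unfolding diagm_def matrix_vector_mult_def
  by (simp add: vec_eq_iff if_distrib[of "\<lambda>x. x * _"] cong: if_cong)

lemma ridge_diagonal_gram:
  assumes gram: "transpose Phi ** Phi = diagm s"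
    and nz: "\<And>j. s $ j + l $ j \<noteq> 0"
  shows "ridge Phi Y (diagm l) = (\<chi> j. (transpose Phi *v Y) $ j / (s $ j + l $ j))"
  using nz unfolding ridge_def gram diagm_add
  by (simp add: matrix_inv_diagm diagm_mult_vec vec_eq_iff)

lemma l2_weights_scaled_inner_diagonal_gram:
  assumes gram: "transpose Phip ** Phip = diagm s"
    and nz: "\<And>j. s $ j + delta \<noteq> 0"
  shows "l2_weights_scaled Phip Phiq delta \<bullet> r
    = col_avg Phiq \<bullet> (\<chi> j. (transpose Phip *v r) $ j / (s $ j + delta))"
proof -
  have "l2_weights_scaled Phip Phiq delta \<bullet> r
      = col_avg Phiq \<bullet> (matrix_inv (diagm (s + (\<chi> j. delta))) *v (transpose Phip *v r))"
    unfolding l2_weights_scaled_def gram scaleR_mat1_eq_diagm diagm_add dot_lmul_matrix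
    by (simp only: matrix_vector_mul_assoc)
  then show ?thesis
    using nz by (simp add: matrix_inv_diagm diagm_mult_vec)
qed

lemma augmented_ridge_coordinate:
  fixes s l d b :: real
  assumes "s + l > 0" "s + d > 0" "s + l + d > 0"
  shows "b / (s + l) + (b - s * (b / (s + l))) / (s + d) = b / (s + d * l / (s + l + d))"
proof -
  have "s + d * l / (s + l + d) = (s + d) * (s + l) / (s + l + d)"
    using assms by (simp add: field_simps)
  moreover have "b - s * (b / (s + l)) = b * l / (s + l)"
    using assms by (simp add: field_simps)
  then have "b / (s + l) + (b - s * (b / (s + l))) / (s + d)
      = b * (s + l + d) / ((s + d) * (s + l))"
    using assms by (simp add: divide_simps) (simp add: algebra_simps)
  ultimately show ?thesis by simp
qed

lemma gamma_vec_bounds: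
  assumes "sig $ j \<noteq> 0" "lam $ j \<ge> 0" "delta \<ge> 0"
  shows "0 \<le> gamma_vec sig lam delta $ j \<and> gamma_vec sig lam delta $ j \<le> lam $ j"
proof -
  have pos: "(sig $ j)\<^sup>2 + lam $ j + delta > 0"
    using assms by (simp add: add_pos_nonneg)
  have "delta * lam $ j \<le> lam $ j * ((sig $ j)\<^sup>2 + lam $ j + delta)"
    using assms by (simp add: algebra_simps)
  with pos assms show ?thesis
    by (simp add: gamma_vec_def divide_le_eq)
qed

lemma augmented_ridge_diagonal_gram:
  fixes Phip Phiq :: "real^'d^'n"
  assumes gram: "transpose Phip ** Phip = diagm s"
    and s_pos: "\<And>j. s $ j > 0" and lam_nonneg: "\<And>j. lam $ j \<ge> 0" and "delta \<ge> 0"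
  defines "g \<equiv> \<chi> j. delta * lam $ j / (s $ j + lam $ j + delta)"
  shows "col_avg Phiq \<bullet> ridge Phip Y (diagm lam)
      + l2_weights_scaled Phip Phiq delta \<bullet> (Y - Phip *v ridge Phip Y (diagm lam))
    = col_avg Phiq \<bullet> ridge Phip Y (diagm g)"
proof -
  define b where "b = transpose Phip *v Y"
  have pos: "s $ j + lam $ j > 0" "s $ j + delta > 0" "s $ j + lam $ j + delta > 0" for j
    using s_pos[of j] lam_nonneg[of j] \<open>delta \<ge> 0\<close> by linarith+
  have "s $ j + g $ j > 0" for j
    using s_pos[of j] lam_nonneg[of j] \<open>delta \<ge> 0\<close> pos(3)[of j]
    by (simp add: g_def add_pos_nonneg less_imp_le)
  then have ridge_g: "ridge Phip Y (diagm g) = (\<chi> j. b $ j / (s $ j + g $ j))"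
    unfolding b_def by (intro ridge_diagonal_gram gram) (metis less_irrefl)
  have ridge_lam: "ridge Phip Y (diagm lam) = (\<chi> j. b $ j / (s $ j + lam $ j))"
    unfolding b_def using pos(1) by (intro ridge_diagonal_gram gram) (metis less_irrefl)
  have residual: "transpose Phip *v (Y - Phip *v x) = b - diagm s *v x" for x
    unfolding b_def by (simp only: matrix_vector_mult_diff_distrib matrix_vector_mul_assoc gram)
  have "b $ j / (s $ j + lam $ j) + (b $ j - s $ j * (b $ j / (s $ j + lam $ j))) / (s $ j + delta)
      = b $ j / (s $ j + g $ j)" for j
    using augmented_ridge_coordinate[OF pos] by (simp add: g_def)
  then have augmented: "ridge Phip Y (diagm lam)
      + (\<chi> j. (b - diagm s *v ridge Phip Y (diagm lam)) $ j / (s $ j + delta))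
      = ridge Phip Y (diagm g)"
    unfolding ridge_lam ridge_g by (simp add: vec_eq_iff diagm_mult_vec)
  have weights: "l2_weights_scaled Phip Phiq delta \<bullet> (Y - Phip *v ridge Phip Y (diagm lam))
      = col_avg Phiq \<bullet> (\<chi> j. (b - diagm s *v ridge Phip Y (diagm lam)) $ j / (s $ j + delta))"
    unfolding residual[symmetric]
    by (rule l2_weights_scaled_inner_diagonal_gram[OF gram]) (metis pos(2) less_irrefl)
  show ?thesis
    unfolding weights inner_add_right[symmetric] augmented ..
qed

theorem mainTheorem5:
  fixes Phip Phiq :: "real^'d^'n" and Y :: "real^'n"
    and sig lam :: "real^'d" and delta :: real
  assumes "col_avg Phip = 0"
    and "transpose Phip ** Phip = diagm (\<chi> j. (sig $ j)\<^sup>2)"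
    and "\<forall>j. (sig $ j)\<^sup>2 > 0"
    and "\<forall>j. lam $ j \<ge> 0"
    and "delta \<ge> 0"
  shows "(\<forall>j. 0 \<le> gamma_vec sig lam delta $ j \<and> gamma_vec sig lam delta $ j \<le> lam $ j)
    \<and> col_avg Phiq \<bullet> ridge Phip Y (diagm lam)
        + l2_weights_scaled Phip Phiq delta \<bullet> (Y - Phip *v ridge Phip Y (diagm lam))
      = col_avg Phiq \<bullet> ridge Phip Y (diagm (gamma_vec sig lam delta))
    \<and> ((\<forall>i j. lam $ i = lam $ j \<and> sig $ i = sig $ j)
        \<longrightarrow> (\<forall>i j. gamma_vec sig lam delta $ i = gamma_vec sig lam delta $ j))"
proof -
  have bounds: "0 \<le> gamma_vec sig lam delta $ j \<and> gamma_vec sig lam delta $ j \<le> lam $ j" for j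
    using assms(3-5) by (intro gamma_vec_bounds) auto
  have "gamma_vec sig lam delta
      = (\<chi> j. delta * lam $ j / ((\<chi> j. (sig $ j)\<^sup>2) $ j + lam $ j + delta))"
    by (simp add: gamma_vec_def)
  with augmented_ridge_diagonal_gram[OF assms(2)] assms(3-5)
  have identity: "col_avg Phiq \<bullet> ridge Phip Y (diagm lam)
        + l2_weights_scaled Phip Phiq delta \<bullet> (Y - Phip *v ridge Phip Y (diagm lam))
      = col_avg Phiq \<bullet> ridge Phip Y (diagm (gamma_vec sig lam delta))"
    by simp
  have "gamma_vec sig lam delta $ i = gamma_vec sig lam delta $ j"
    if "lam $ i = lam $ j" "sig $ i = sig $ j" for i j
    using that by (simp add: gamma_vec_def)
  with bounds identity show ?thesis by blast
qed

end
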